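(* Let $\mathcal{T}$ be an unrooted tree with leaf set $N=\{1,\dots,n\}$ ($n\ge 3$) in which every internal vertex has degree $3$, and let $\alpha_k\in\mathbb{R}$ be a weight on each edge $k\in E$. Then the Shapley value of the tree game $(N,v_{\mathcal T})$ is a linear function of the edge weights, $\varphi_i(N,v_{\mathcal T})=\sum_{k\in E}\mathbf{M}[i,k]\,\alpha_k$, and its coefficients are given by $$\mathbf{M}[i,k]=\frac{f(i,k)}{n\,c(i,k)}\qquad\text{for all } i\in N,\ k\in E.$$
   Context: An $n$-leaf tree here is an unrooted tree whose leaves are labeled by $N=\{1,\dots,n\}$ and whose internal vertices all have degree 3. Such a tree has $2n-3$ edges: the $n$ leaf edges, each incident to a leaf, and the $n-3$ internal edges $I_1,\dots,I_{n-3}$. Each edge $k\in E$ carries a real weight $\alpha_k$. The tree game $v_{\mathcal T}:2^N\to\mathbb{R}$ assigns to each $S\subseteq N$ the sum of the weights of the edges of the minimal subtree of $\mathcal T$ spanning the leaves in $S$. In particular $v_{\mathcal T}(\emptyset)=0$ and $v_{\mathcal T}(\{i\})=0$. The Shapley value of a cooperative game $(N,v)$ is $$\varphi_i(N,v)=\frac{1}{n!}\sum_{S\subseteq N,\ i\in S}(|S|-1)!\,(n-|S|)!\,\bigl(v(S)-v(S\setminus\{i\})\bigr).$$ Split counts: for a leaf $i$ and an edge $k$, removing $k$ splits $\mathcal T$ into two subtrees. $\mathcal C(i,k)$ is the set of leaves in the subtree containing $i$, and $\mathcal F(i,k)$ is the set of leaves in the other subtree. Their sizes are $c(i,k)=|\mathcal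 C(i,k)|$ and $f(i,k)=|\mathcal F(i,k)|$, so $c(i,k)+f(i,k)=n$. $\mathbf M$ is the $n\times(2n-3)$ matrix of the Shapley transformation. Its rows are indexed by leaves and its columns by edges, in the order leaf edges $1,\dots,n$ followed by internal edges $I_1,\dots,I_{n-3}$. *)

theory Defs
  imports Complex_Main
begin

definition conn :: "'v set set \<Rightarrow> 'v \<Rightarrow> 'v \<Rightarrow> bool" where
  "conn F a b \<longleftrightarrow> (a, b) \<in> {(x, y). {x, y} \<in> F}\<^sup>*"

definition degree :: "'v set set \<Rightarrow> 'v \<Rightarrow> nat" where
  "degree E v = card {e \<in> E. v \<in> e}"

text \<open>A (finite, unrooted) tree: a finite connected graph that is minimally connected,
  i.e. removing any edge disconnects its two endpoints (equivalently: acyclic).\<close>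
definition is_tree :: "'v set \<Rightarrow> 'v set set \<Rightarrow> bool" where
  "is_tree V E \<longleftrightarrow> finite V
     \<and> (\<forall>e\<in>E. \<exists>u w. u \<noteq> w \<and> u \<in> V \<and> w \<in> V \<and> e = {u, w})
     \<and> (\<forall>a\<in>V. \<forall>b\<in>V. conn E a b)
     \<and> (\<forall>e\<in>E. \<forall>u w. e = {u, w} \<longrightarrow> \<not> conn (E - {e}) u w)"

text \<open>Edge set of the minimal subtree spanning a set of vertices X: the smallest set of
  edges connecting all vertices of X (empty if |X| \<le> 1).\<close>
definition span_edges :: "'v set set \<Rightarrow> 'v set \<Rightarrow> 'v set set" where
  "span_edges E X = \<Inter> {F. F \<subseteq> E \<and> (\<forall>a\<in>X. \<forall>b\<in>X. conn F a b)}"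

definition tree_game :: "'v set set \<Rightarrow> ('v set \<Rightarrow> real) \<Rightarrow> (nat \<Rightarrow> 'v) \<Rightarrow> nat set \<Rightarrow> real" where
  "tree_game E \<alpha> leaf S = (\<Sum>k\<in>span_edges E (leaf ` S). \<alpha> k)"

definition shapley :: "nat set \<Rightarrow> (nat set \<Rightarrow> real) \<Rightarrow> nat \<Rightarrow> real" where
  "shapley N v i = (\<Sum>S\<in>{S. S \<subseteq> N \<and> i \<in> S}.
      fact (card S - 1) * fact (card N - card S) / fact (card N) * (v S - v (S - {i})))"

definition c_split :: "nat \<Rightarrow> 'v set set \<Rightarrow> (nat \<Rightarrow> 'v) \<Rightarrow> nat \<Rightarrow> 'v set \<Rightarrow> nat" where
  "c_split n E leaf i k = card {j \<in> {1..n}. conn (E - {k}) (leaf i) (leaf j)}"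

definition f_split :: "nat \<Rightarrow> 'v set set \<Rightarrow> (nat \<Rightarrow> 'v) \<Rightarrow> nat \<Rightarrow> 'v set \<Rightarrow> nat" where
  "f_split n E leaf i k = card {j \<in> {1..n}. \<not> conn (E - {k}) (leaf i) (leaf j)}"

definition M_entry :: "nat \<Rightarrow> 'v set set \<Rightarrow> (nat \<Rightarrow> 'v) \<Rightarrow> nat \<Rightarrow> 'v set \<Rightarrow> real" where
  "M_entry n E leaf i k = real (f_split n E leaf i k) / (real n * real (c_split n E leaf i k))"

end

theory Submission
  imports Defs
begin

(* The tree game is the sum over the edges k of \<alpha> k times the game that is 1 exactly on the
   coalitions separated by k, i.e. meeting both sides C(i,k) and F(i,k) of the split.  By
   linearity of the Shapley value it suffices to evaluate such a split game.  The marginal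
   contribution of i to a coalition T of other players is 1 iff T is a nonempty subset of F(i,k).
   Summed with the Shapley weights over all T \<subseteq> F(i,k) this is the probability that i precedes
   the other players of C(i,k) in a random order, i.e. 1/c; removing T = {} subtracts 1/n, and
   1/c - 1/n = f/(n c). *)

lemma sum_Pow_card:
  assumes "finite F"
  shows "(\<Sum>T\<in>Pow F. h (card T)) = (\<Sum>t\<le>card F. of_nat (card F choose t) * h t)"
proof -
  have "(\<Sum>T\<in>Pow F. h (card T)) = (\<Sum>t\<le>card F. \<Sum>T | T \<in> Pow F \<and> card T = t. h (card T))"
    using assms by (intro sum.group[symmetric]) (auto simp: card_mono)
  also have "\<dots> = (\<Sum>t\<le>card F. of_nat (card F choose t) * h t)"
    using n_subsets[OF assms] by simp
  finally show ?thesis .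
qed

lemma sum_binomial_fact_fact:
  assumes "c \<ge> 1"
  shows "(\<Sum>t\<le>f. real (f choose t) * (fact t * fact (f + c - 1 - t))) = fact (f + c) / c"
proof -
  have summand: "real (f choose t) * (fact t * fact (f + c - 1 - t))
      = fact f * fact (c - 1) * real ((c - 1 + (f - t)) choose (f - t))" if "t \<le> f" for t
    using that assms
    by (simp add: binomial_fact algebra_simps)
  have "(\<Sum>t\<le>f. real (f choose t) * (fact t * fact (f + c - 1 - t)))
      = fact f * fact (c - 1) * (\<Sum>t\<le>f. real ((c - 1 + (f - t)) choose (f - t)))"
    unfolding sum_distrib_left by (rule sum.cong[OF refl summand]) simp
  also have "(\<Sum>t\<le>f. real ((c - 1 + (f - t)) choose (f - t))) = (\<Sum>s\<le>f. real ((c - 1 + s) choose s))"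
    by (rule sum.reindex_bij_witness[where i="\<lambda>s. f - s" and j="\<lambda>t. f - t"]) auto
  also have "\<dots> = real ((f + c) choose f)"
    using sum_choose_lower[of "c - 1" f] assms by (simp flip: of_nat_sum add: add.commute)
  also have "\<dots> = fact (f + c) / (fact f * (c * fact (c - 1)))"
    using assms by (simp add: binomial_fact fact_reduce[of c])
  finally show ?thesis
    by (simp add: field_simps)
qed

lemma shapley_linear:
  assumes "finite K" and "\<And>S. S \<subseteq> N \<Longrightarrow> v S = (\<Sum>k\<in>K. a k * u k S)"
  shows "shapley N v i = (\<Sum>k\<in>K. a k * shapley N (u k) i)"
proof -
  have marginal: "v S - v (S - {i}) = (\<Sum>k\<in>K. a k * (u k S - u k (S - {i})))" if "S \<subseteq> N" for S
    using assms(2)[of S] assms(2)[of "S - {i}"] that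
    by (auto simp: sum_subtractf right_diff_distrib)
  have "shapley N v i = (\<Sum>S | S \<subseteq> N \<and> i \<in> S. \<Sum>k\<in>K. a k *
      (fact (card S - 1) * fact (card N - card S) / fact (card N) * (u k S - u k (S - {i}))))"
    unfolding shapley_def
    by (rule sum.cong) (auto simp: marginal sum_distrib_left sum_divide_distrib mult_ac)
  also have "\<dots> = (\<Sum>k\<in>K. a k * shapley N (u k) i)"
    unfolding shapley_def sum_distrib_left by (rule sum.swap)
  finally show ?thesis .
qed

definition split_game :: "'a set \<Rightarrow> 'a set \<Rightarrow> real" where
  "split_game F S = (if S \<inter> F \<noteq> {} \<and> \<not> S \<subseteq> F then 1 else 0)"

lemma sum_subsets_containing:
  assumes "i \<in> N"
  shows "(\<Sum>S | S \<subseteq> N \<and> i \<in> S. g S) = (\<Sum>T\<in>Pow (N - {i}). g (insert i T))"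
  by (rule sum.reindex_bij_witness[where i="insert i" and j="\<lambda>S. S - {i}"])
    (use assms in \<open>auto simp: insert_absorb\<close>)

lemma split_game_marginal:
  assumes "i \<notin> F" and "i \<notin> T"
  shows "split_game F (insert i T) - split_game F T = (if T \<noteq> {} \<and> T \<subseteq> F then 1 else 0)"
  using assms by (auto simp: split_game_def)

lemma shapley_split_game:
  assumes "finite N" and "F \<subseteq> N" and "i \<in> N - F"
  shows "shapley N (split_game F) i = card F / (card N * card (N - F))"
proof -
  define f c where "f = card F" and "c = card (N - F)"
  define w :: "nat \<Rightarrow> real" where "w s = fact (s - 1) * fact (f + c - s) / fact (f + c)" for s
  have fin: "finite F" using assms(1,2) by (rule finite_subset[rotated])
  have card_N: "card N = f + c"
    using card_Diff_subset[OF fin assms(2)] card_mono[OF assms(1,2)] by (simp add: f_def c_def)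
  have c_pos: "c \<ge> 1"
    using assms(1,3) unfolding c_def by (metis One_nat_def Suc_leI card_gt_0_iff empty_iff finite_Diff)
  have "shapley N (split_game F) i
      = (\<Sum>T\<in>Pow (N - {i}). if T \<noteq> {} \<and> T \<subseteq> F then w (card T + 1) else 0)"
    unfolding shapley_def sum_subsets_containing[OF DiffD1[OF assms(3)]]
  proof (rule sum.cong[OF refl])
    fix T assume "T \<in> Pow (N - {i})"
    then have "i \<notin> T" "finite T" using assms(1) finite_subset by auto
    then show "fact (card (insert i T) - 1) * fact (card N - card (insert i T)) / fact (card N)
        * (split_game F (insert i T) - split_game F (insert i T - {i}))
      = (if T \<noteq> {} \<and> T \<subseteq> F then w (card T + 1) else 0)"
      using split_game_marginal[of i F T] assms(3) by (simp add: w_def card_N)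
  qed
  also have "\<dots> = (\<Sum>T\<in>Pow F - {{}}. w (card T + 1))"
  proof -
    have "finite (Pow (N - {i}))" using assms(1) by simp
    moreover have "{T \<in> Pow (N - {i}). T \<noteq> {} \<and> T \<subseteq> F} = Pow F - {{}}"
      using assms(2,3) by blast
    ultimately show ?thesis
      by (simp only: sum.inter_filter[symmetric])
  qed
  also have "\<dots> = (\<Sum>T\<in>Pow F. w (card T + 1)) - w 1"
    using fin by (simp add: sum_diff1)
  also have "(\<Sum>T\<in>Pow F. w (card T + 1)) = (\<Sum>t\<le>f. real (f choose t) * w (t + 1))"
    unfolding f_def by (rule sum_Pow_card[OF fin])
  also have "\<dots> = (\<Sum>t\<le>f. real (f choose t) * (fact t * fact (f + c - 1 - t))) / fact (f + c)"
    by (simp add: w_def sum_divide_distrib)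
  also have "\<dots> = 1 / c"
    unfolding sum_binomial_fact_fact[OF c_pos] by simp
  also have "w 1 = 1 / (f + c)"
    using c_pos by (simp add: w_def fact_reduce[of "f + c"])
  finally show ?thesis
    using c_pos by (simp add: card_N f_def[symmetric] c_def[symmetric] field_simps)
qed

lemma conn_refl: "conn F a a"
  by (simp add: conn_def)

lemma conn_trans: "conn F a b \<Longrightarrow> conn F b c \<Longrightarrow> conn F a c"
  unfolding conn_def by (rule rtrancl_trans)

lemma conn_sym: "conn F a b \<Longrightarrow> conn F b a"
proof -
  have "sym {(x, y). {x, y} \<in> F}"
    by (auto intro: symI simp: insert_commute)
  then show "conn F a b \<Longrightarrow> conn F b a"
    unfolding conn_def by (blast intro: symD[OF sym_rtrancl])
qed

lemma conn_mono: "conn F a b \<Longrightarrow> F \<subseteq> G \<Longrightarrow> conn G a b"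
  using rtrancl_mono[of "{(x, y). {x, y} \<in> F}" "{(x, y). {x, y} \<in> G}"]
  unfolding conn_def by blast

lemma conn_Diff_edge:
  assumes "conn E a x"
  shows "conn (E - {{u, w}}) a x \<or> conn (E - {{u, w}}) u x \<or> conn (E - {{u, w}}) w x"
  using assms unfolding conn_def
proof (induction rule: rtrancl_induct)
  case (step y z)
  show ?case
  proof (cases "{y, z} = {u, w}")
    case True
    then show ?thesis by (auto simp: doubleton_eq_iff)
  next
    case False
    with step.hyps(2) have "(y, z) \<in> {(x, y). {x, y} \<in> E - {{u, w}}}" by simp
    with step.IH show ?thesis by (meson rtrancl.rtrancl_into_rtrancl)
  qed
qed simp

lemma conn_Diff_edge_two_classes:
  assumes "conn E x y" and "conn E x z"
    and "\<not> conn (E - {{u, w}}) x y" and "\<not> conn (E - {{u, w}}) x z"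
  shows "conn (E - {{u, w}}) y z"
  using assms conn_Diff_edge[OF assms(1)] conn_Diff_edge[OF assms(2)]
    conn_Diff_edge[OF conn_sym[OF assms(1)]]
  by (meson conn_sym conn_trans)

lemma span_edges_eq:
  assumes "\<forall>a\<in>X. \<forall>b\<in>X. conn E a b"
  shows "span_edges E X = {k \<in> E. \<exists>a\<in>X. \<exists>b\<in>X. \<not> conn (E - {k}) a b}"
proof (intro equalityI subsetI)
  fix k assume "k \<in> span_edges E X"
  then have "k \<in> E" and "\<not> (\<forall>a\<in>X. \<forall>b\<in>X. conn (E - {k}) a b)"
    using assms unfolding span_edges_def by blast+
  then show "k \<in> {k \<in> E. \<exists>a\<in>X. \<exists>b\<in>X. \<not> conn (E - {k}) a b}" by blast
next
  fix k assume "k \<in> {k \<in> E. \<exists>a\<in>X. \<exists>b\<in>X. \<not> conn (E - {k}) a b}"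
  then obtain a b where "a \<in> X" "b \<in> X" "\<not> conn (E - {k}) a b" by blast
  then show "k \<in> span_edges E X"
    unfolding span_edges_def by (blast intro: conn_mono)
qed

lemma separated_iff_split_game:
  assumes "\<forall>a\<in>N. \<forall>b\<in>N. conn E (leaf a) (leaf b)" and "i \<in> N" and "S \<subseteq> N"
  shows "(\<exists>a\<in>S. \<exists>b\<in>S. \<not> conn (E - {{u, w}}) (leaf a) (leaf b))
    \<longleftrightarrow> split_game {j \<in> N. \<not> conn (E - {{u, w}}) (leaf i) (leaf j)} S = 1"
proof -
  let ?c = "conn (E - {{u, w}})"
  let ?F = "{j \<in> N. \<not> ?c (leaf i) (leaf j)}"
  have "(\<exists>a\<in>S. \<exists>b\<in>S. \<not> ?c (leaf a) (leaf b)) \<longleftrightarrow> (\<exists>a\<in>S. a \<in> ?F) \<and> (\<exists>b\<in>S. b \<notin> ?F)"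
  proof
    assume "\<exists>a\<in>S. \<exists>b\<in>S. \<not> ?c (leaf a) (leaf b)"
    then obtain a b where ab: "a \<in> S" "b \<in> S" and sep: "\<not> ?c (leaf a) (leaf b)" by blast
    with assms(3) have "a \<in> N" "b \<in> N" by auto
    have "a \<in> ?F \<or> b \<in> ?F"
    proof (rule ccontr)
      assume "\<not> (a \<in> ?F \<or> b \<in> ?F)"
      with \<open>a \<in> N\<close> \<open>b \<in> N\<close> have "?c (leaf i) (leaf a)" "?c (leaf i) (leaf b)" by auto
      then have "?c (leaf a) (leaf b)" by (rule conn_trans[OF conn_sym])
      with sep show False ..
    qed
    moreover have "a \<notin> ?F \<or> b \<notin> ?F"
    proof (rule ccontr)
      assume "\<not> (a \<notin> ?F \<or> b \<notin> ?F)"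
      then have "\<not> ?c (leaf i) (leaf a)" "\<not> ?c (leaf i) (leaf b)" by auto
      moreover have "conn E (leaf i) (leaf a)" "conn E (leaf i) (leaf b)"
        using assms(1,2) \<open>a \<in> N\<close> \<open>b \<in> N\<close> by auto
      ultimately have "?c (leaf a) (leaf b)"
        by (intro conn_Diff_edge_two_classes)
      with sep show False ..
    qed
    ultimately show "(\<exists>a\<in>S. a \<in> ?F) \<and> (\<exists>b\<in>S. b \<notin> ?F)"
      using ab by blast
  next
    assume "(\<exists>a\<in>S. a \<in> ?F) \<and> (\<exists>b\<in>S. b \<notin> ?F)"
    then obtain a b where "a \<in> S" "b \<in> S" "a \<in> ?F" "b \<notin> ?F" by blast
    with assms(3) have "\<not> ?c (leaf i) (leaf a)" and "?c (leaf i) (leaf b)" by auto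
    then have "\<not> ?c (leaf b) (leaf a)" by (blast intro: conn_trans)
    with \<open>a \<in> S\<close> \<open>b \<in> S\<close> show "\<exists>a\<in>S. \<exists>b\<in>S. \<not> ?c (leaf a) (leaf b)" by blast
  qed
  then show ?thesis
    unfolding split_game_def by auto
qed

lemma tree_game_eq_sum_split_games:
  assumes "finite E" and "\<forall>e\<in>E. \<exists>u w. e = {u, w}"
    and "\<forall>a\<in>N. \<forall>b\<in>N. conn E (leaf a) (leaf b)" and "i \<in> N" and "S \<subseteq> N"
  shows "tree_game E \<alpha> leaf S
    = (\<Sum>k\<in>E. \<alpha> k * split_game {j \<in> N. \<not> conn (E - {k}) (leaf i) (leaf j)} S)"
proof -
  let ?split = "\<lambda>k. split_game {j \<in> N. \<not> conn (E - {k}) (leaf i) (leaf j)} S"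
  have "span_edges E (leaf ` S) = {k \<in> E. \<exists>a\<in>S. \<exists>b\<in>S. \<not> conn (E - {k}) (leaf a) (leaf b)}"
    using assms(3,5) by (subst span_edges_eq) auto
  also have "\<dots> = {k \<in> E. ?split k = 1}"
  proof (intro Collect_cong conj_cong refl)
    fix k assume "k \<in> E"
    then obtain u w where "k = {u, w}" using assms(2) by blast
    then show "(\<exists>a\<in>S. \<exists>b\<in>S. \<not> conn (E - {k}) (leaf a) (leaf b)) \<longleftrightarrow> ?split k = 1"
      using separated_iff_split_game[OF assms(3-5)] by simp
  qed
  finally have "tree_game E \<alpha> leaf S = (\<Sum>k \<in> {k \<in> E. ?split k = 1}. \<alpha> k)"
    by (simp only: tree_game_def)
  also have "\<dots> = (\<Sum>k\<in>E. \<alpha> k * ?split k)"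
    using assms(1) by (simp add: sum.inter_filter) (rule sum.cong; simp add: split_game_def)
  finally show ?thesis .
qed

lemma is_tree_edges:
  assumes "is_tree V E"
  shows "finite E" and "\<forall>e\<in>E. \<exists>u w. e = {u, w}"
proof -
  have "finite V" and edges_in_V: "\<forall>e\<in>E. \<exists>u w. u \<noteq> w \<and> u \<in> V \<and> w \<in> V \<and> e = {u, w}"
    using assms unfolding is_tree_def by blast+
  moreover from edges_in_V have "E \<subseteq> Pow V"
    by fastforce
  ultimately show "finite E"
    by (meson finite_Pow_iff finite_subset)
  show "\<forall>e\<in>E. \<exists>u w. e = {u, w}"
    using edges_in_V by blast
qed

lemma shapley_split_game_eq_M_entry:
  assumes "i \<in> {1..n}"
  shows "shapley {1..n} (split_game {j \<in> {1..n}. \<not> conn (E - {k}) (leaf i) (leaf j)}) i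
    = M_entry n E leaf i k"
proof -
  let ?F = "{j \<in> {1..n}. \<not> conn (E - {k}) (leaf i) (leaf j)}"
  have "?F \<subseteq> {1..n}" and "i \<in> {1..n} - ?F"
    using assms conn_refl by auto
  then have "shapley {1..n} (split_game ?F) i = card ?F / (card {1..n} * card ({1..n} - ?F))"
    by (intro shapley_split_game) simp_all
  also have "{1..n} - ?F = {j \<in> {1..n}. conn (E - {k}) (leaf i) (leaf j)}"
    by blast
  finally show ?thesis
    unfolding M_entry_def f_split_def c_split_def by simp
qed

theorem theorem4:
  fixes V :: "'v set" and E :: "'v set set" and leaf :: "nat \<Rightarrow> 'v"
    and n :: nat and \<alpha> :: "'v set \<Rightarrow> real"
  assumes "n \<ge> 3"
    and "is_tree V E"
    and "bij_betw leaf {1..n} {v \<in> V. degree E v = 1}"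
    and "\<forall>v\<in>V. degree E v \<noteq> 1 \<longrightarrow> degree E v = 3"
  shows "\<forall>i\<in>{1..n}. shapley {1..n} (tree_game E \<alpha> leaf) i
           = (\<Sum>k\<in>E. M_entry n E leaf i k * \<alpha> k)"
proof
  fix i assume i: "i \<in> {1..n}"
  have "leaf ` {1..n} \<subseteq> V"
    using bij_betw_imp_surj_on[OF assms(3)] by blast
  with assms(2) have leaves_conn: "\<forall>a\<in>{1..n}. \<forall>b\<in>{1..n}. conn E (leaf a) (leaf b)"
    unfolding is_tree_def by blast
  have "shapley {1..n} (tree_game E \<alpha> leaf) i
      = (\<Sum>k\<in>E. \<alpha> k * shapley {1..n} (split_game {j \<in> {1..n}. \<not> conn (E - {k}) (leaf i) (leaf j)}) i)"
    using is_tree_edges[OF assms(2)] leaves_conn i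
    by (intro shapley_linear tree_game_eq_sum_split_games)
  also have "\<dots> = (\<Sum>k\<in>E. M_entry n E leaf i k * \<alpha> k)"
    unfolding shapley_split_game_eq_M_entry[OF i] by (simp add: mult.commute)
  finally show "shapley {1..n} (tree_game E \<alpha> leaf) i = (\<Sum>k\<in>E. M_entry n E leaf i k * \<alpha> k)" .
qed

end
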